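(* Let $1\le s<t$. One can assign to each word $w\in W$ a pair of rational numbers $(a_w,b_w)\in\mathbb{Q}_{>2}^2$, the corresponding linear map $\ell_w:x\mapsto a_wx+b_w$, and a value $r_w\in(s,t)$ such that: (i) for all $v,w\in W$, if $v\le_W w$ and $v\ne w$, then $a_v<a_w$ and $b_v<b_w$ (and thus in particular $\ell_v<\ell_w$ on $(s,t)$); (ii) for all $v,w\in W$, if $v\not\le_W w$, then $\ell_v(r_v)>\ell_w(r_v)$ (and in particular $\ell_v\not\le\ell_w$ pointwise on $(s,t)$).
   Context: $W=\{0,1\}^*$ is the set of finite binary words; $w\le_W w'$ iff $w'$ is a prefix (initial segment) of $w$. $\mathbb{Q}_{>2}$ denotes the rational numbers greater than $2$. *)

theory Defs
  imports Complex_Main "HOL-Library.Sublist"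
begin

definition leW :: "bool list \<Rightarrow> bool list \<Rightarrow> bool" where
  "leW v w \<longleftrightarrow> prefix w v"

end

theory Submission
  imports Defs
begin

text \<open>
  Fix rationals \<open>1 \<le> r\<^sub>0 - 4L < r\<^sub>0\<close> in \<open>(s, t)\<close> and a super-exponentially decreasing
  sequence \<open>\<lambda>\<^sub>0 = L\<close>, \<open>\<lambda>\<^sub>i\<^sub>+\<^sub>1 = c \<lambda>\<^sub>i\<^sup>2\<close>. A word \<open>w\<close> is sent to the point \<open>R\<^sub>w\<close> obtained from
  \<open>r\<^sub>0\<close> by subtracting \<open>\<lambda>\<^sub>i\<close> or \<open>2\<lambda>\<^sub>i\<close> according to its \<open>i\<close>-th letter, and to the depth
  \<open>D\<^sub>w = K (\<lambda>\<^sub>0 + \<dots> + \<lambda>\<^bsub>|w|-1\<^esub>)\<close>. The line \<open>\<ell>\<^sub>w\<close> is the tangent to the parabola \<open>x\<^sup>2 + C\<close>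
  at \<open>R\<^sub>w\<close>, lowered by \<open>D\<^sub>w\<close>, so that \<open>\<ell>\<^sub>v(R\<^sub>v) - \<ell>\<^sub>w(R\<^sub>v) = (R\<^sub>v - R\<^sub>w)\<^sup>2 + D\<^sub>w - D\<^sub>v\<close>.

  Extending a word moves its point to the left and lowers its line by more than the
  decrease of \<open>R\<^sup>2\<close>, which gives (i). For (ii), if \<open>v\<close> is a proper prefix of \<open>w\<close> then
  \<open>D\<^sub>v < D\<^sub>w\<close>; if \<open>v\<close> and \<open>w\<close> first differ at position \<open>j\<close>, their points are at least
  \<open>\<lambda>\<^sub>j/2\<close> apart while their depths differ by less than \<open>2K\<lambda>\<^sub>j\<^sub>+\<^sub>1 = 2Kc\<lambda>\<^sub>j\<^sup>2 \<le> \<lambda>\<^sub>j\<^sup>2/8\<close>.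
\<close>

locale fast_decay =
  fixes L c :: "'a::linordered_field"
  assumes L_pos: "0 < L" and c_pos: "0 < c" and Lc_le: "L * c \<le> 1/8"
begin

fun weight :: "nat \<Rightarrow> 'a" where
  "weight 0 = L"
| "weight (Suc i) = c * (weight i)\<^sup>2"

lemma weight_step_le:
  assumes "0 < x" and "x \<le> L"
  shows "c * x\<^sup>2 \<le> x / 8"
proof -
  have "c * x\<^sup>2 = (c * x) * x" by (simp add: power2_eq_square)
  also have "\<dots> \<le> (c * L) * x" using assms c_pos by (intro mult_right_mono) auto
  also have "\<dots> \<le> 1/8 * x" using assms Lc_le by (intro mult_right_mono) (auto simp: mult.commute)
  finally show ?thesis by simp
qed

lemma weight_pos_le: "0 < weight i \<and> weight i \<le> L"
proof (induction i)
  case 0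
  show ?case using L_pos by simp
next
  case (Suc i)
  then show ?case using weight_step_le[of "weight i"] c_pos by simp
qed

lemma weight_pos: "0 < weight i"
  using weight_pos_le by blast

lemma weight_Suc_le: "weight (Suc i) \<le> weight i / 8"
  using weight_step_le weight_pos_le by simp

definition weight_sum :: "nat \<Rightarrow> nat \<Rightarrow> 'a" where
  "weight_sum k n = (\<Sum>i<n. weight (k + i))"

lemma weight_sum_Suc: "weight_sum k (Suc n) = weight k + weight_sum (Suc k) n"
  unfolding weight_sum_def by (subst sum.lessThan_Suc_shift) (simp del: weight.simps)

lemma weight_sum_add: "weight_sum k (m + n) = weight_sum k m + weight_sum (k + m) n"
  by (induction n) (auto simp: weight_sum_def add.assoc)

lemma weight_sum_nonneg: "0 \<le> weight_sum k n"
  unfolding weight_sum_def by (simp add: sum_nonneg less_imp_le weight_pos)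

lemma weight_sum_pos: "0 < n \<Longrightarrow> 0 < weight_sum k n"
  by (cases n) (auto simp: weight_sum_Suc intro: add_pos_nonneg weight_pos weight_sum_nonneg)

lemma weight_sum_less: "weight_sum k n < 2 * weight k"
proof -
  have "weight_sum k n \<le> 2 * (weight k - weight (k + n))"
  proof (induction n)
    case (Suc n)
    then show ?case
      using weight_Suc_le[of "k + n"] weight_pos[of "k + n"] by (simp add: weight_sum_def)
  qed (simp add: weight_sum_def)
  then show ?thesis using weight_pos[of "k + n"] by simp
qed

fun word_weight :: "nat \<Rightarrow> bool list \<Rightarrow> 'a" where
  "word_weight k [] = 0"
| "word_weight k (x # xs) = (if x then 2 else 1) * weight k + word_weight (Suc k) xs"

lemma word_weight_append:
  "word_weight k (xs @ ys) = word_weight k xs + word_weight (k + length xs) ys"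
  by (induction xs arbitrary: k) auto

lemma word_weight_bounds:
  "weight_sum k (length xs) \<le> word_weight k xs \<and> word_weight k xs \<le> 2 * weight_sum k (length xs)"
proof (induction xs arbitrary: k)
  case Nil
  show ?case by (simp add: weight_sum_def)
next
  case (Cons x xs)
  show ?case using Cons[of "Suc k"] weight_pos[of k] by (simp add: weight_sum_Suc)
qed

lemma word_weight_nonneg: "0 \<le> word_weight k xs"
  using word_weight_bounds weight_sum_nonneg order_trans by blast

lemma word_weight_less: "word_weight k xs < 4 * weight k"
  using word_weight_bounds[of k xs] weight_sum_less[of k "length xs"] by simp

text \<open>Letters weigh \<open>\<lambda>\<^sub>k\<close> or \<open>2\<lambda>\<^sub>k\<close>, and all later letters together weigh at most \<open>\<lambda>\<^sub>k/2\<close>.\<close>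

lemma word_weight_Cons_diverge:
  assumes "x \<noteq> y"
  shows "weight k / 2 \<le> \<bar>word_weight k (x # xs) - word_weight k (y # ys)\<bar>"
proof -
  have tail: "0 \<le> word_weight (Suc k) zs \<and> word_weight (Suc k) zs \<le> weight k / 2" for zs
    using word_weight_less[of "Suc k" zs] weight_Suc_le[of k] word_weight_nonneg by simp
  show ?thesis
    using assms tail[of xs] tail[of ys] by (cases x; cases y) (auto simp: abs_if)
qed

end

locale tangent_family = fast_decay L c for L c :: "'a::linordered_field" +
  fixes r\<^sub>0 K :: 'a
  assumes r0_ge: "1 + 4 * L \<le> r\<^sub>0" and K_gt: "4 * r\<^sub>0 < K" and Kc_le: "K * c \<le> 1/16"
begin

definition point :: "bool list \<Rightarrow> 'a" where
  "point w = r\<^sub>0 - word_weight 0 w"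

definition depth :: "bool list \<Rightarrow> 'a" where
  "depth w = K * weight_sum 0 (length w)"

definition slope :: "bool list \<Rightarrow> 'a" where
  "slope w = 2 * point w"

definition intercept :: "bool list \<Rightarrow> 'a" where
  "intercept w = (3 + r\<^sub>0\<^sup>2 + 2 * K * L) - (point w)\<^sup>2 - depth w"

lemma K_pos: "0 < K"
  using r0_ge K_gt L_pos by simp

lemma point_gt: "r\<^sub>0 - 4 * L < point w"
  using word_weight_less[of 0 w] by (simp add: point_def)

lemma point_le: "point w \<le> r\<^sub>0"
  using word_weight_nonneg[of 0 w] by (simp add: point_def)

lemma depth_bounds: "0 \<le> depth w \<and> depth w < 2 * K * L"
  using weight_sum_nonneg[of 0 "length w"] weight_sum_less[of 0 "length w"] K_pos
  by (simp add: depth_def)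

lemma slope_gt_2: "2 < slope w"
  using point_gt[of w] r0_ge by (simp add: slope_def)

lemma intercept_gt_2: "2 < intercept w"
proof -
  have "(point w)\<^sup>2 \<le> r\<^sub>0\<^sup>2"
    using point_gt[of w] point_le[of w] r0_ge L_pos by (intro power_mono) auto
  then show ?thesis using depth_bounds[of w] by (simp add: intercept_def)
qed

lemma tangent_gap:
  "slope v * point v + intercept v - (slope w * point v + intercept w)
     = (point v - point w)\<^sup>2 + depth w - depth v"
  by (simp add: slope_def intercept_def power2_eq_square algebra_simps)

lemma extension_point_depth:
  "point w - point (w @ z) = word_weight (length w) z"
  "depth (w @ z) - depth w = K * weight_sum (length w) (length z)"
  by (simp_all add: point_def depth_def word_weight_append weight_sum_add algebra_simps)

lemma extension_decreases:
  assumes "z \<noteq> []"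
  shows "slope (w @ z) < slope w \<and> intercept (w @ z) < intercept w"
proof -
  let ?v = "w @ z" and ?T = "weight_sum (length w) (length z)"
  have T_pos: "0 < ?T" using assms weight_sum_pos by simp
  have shift: "?T \<le> point w - point ?v \<and> point w - point ?v \<le> 2 * ?T"
    using word_weight_bounds extension_point_depth(1) by metis
  have "(point w)\<^sup>2 - (point ?v)\<^sup>2 = (point w - point ?v) * (point w + point ?v)"
    by (simp add: power2_eq_square algebra_simps)
  also have "\<dots> \<le> (point w - point ?v) * (2 * r\<^sub>0)"
    using shift T_pos point_le[of w] point_le[of ?v] by (intro mult_left_mono) auto
  also have "\<dots> \<le> (2 * ?T) * (2 * r\<^sub>0)"
    using shift r0_ge L_pos by (intro mult_right_mono) auto
  also have "\<dots> < K * ?T"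
    using T_pos K_gt by simp
  finally have "(point w)\<^sup>2 - (point ?v)\<^sup>2 < depth ?v - depth w"
    using extension_point_depth(2) by simp
  then show ?thesis
    using shift T_pos by (simp add: slope_def intercept_def)
qed

lemma separation_extension:
  assumes "z \<noteq> []"
  shows "slope (v @ z) * point v + intercept (v @ z) < slope v * point v + intercept v"
proof -
  have "0 < depth (v @ z) - depth v"
    using assms extension_point_depth(2) K_pos weight_sum_pos by simp
  then have "0 < slope v * point v + intercept v - (slope (v @ z) * point v + intercept (v @ z))"
    unfolding tangent_gap using zero_le_power2[of "point v - point (v @ z)"] by linarith
  then show ?thesis by simp
qed

lemma separation_diverge:
  assumes "x \<noteq> y" and v: "v = u @ x # xs" and w: "w = u @ y # ys"
  shows "slope w * point v + intercept w < slope v * point v + intercept v"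
proof -
  let ?j = "length u"
  let ?l = "weight ?j"
  have "(?l / 2)\<^sup>2 \<le> (point v - point w)\<^sup>2"
  proof -
    have "\<bar>point v - point w\<bar> = \<bar>word_weight ?j (x # xs) - word_weight ?j (y # ys)\<bar>"
      by (simp add: v w point_def word_weight_append)
    then have "\<bar>?l / 2\<bar> \<le> \<bar>point v - point w\<bar>"
      using word_weight_Cons_diverge[OF assms(1)] weight_pos[of ?j] by simp
    then show ?thesis by (simp only: abs_le_square_iff)
  qed
  moreover have "depth v - depth w < (?l / 2)\<^sup>2"
  proof -
    have "depth v - depth w
        = K * (weight_sum (Suc ?j) (length xs) - weight_sum (Suc ?j) (length ys))"
      by (simp add: v w depth_def weight_sum_add weight_sum_Suc algebra_simps)
    also have "\<dots> \<le> K * (2 * (c * ?l\<^sup>2))"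
      using weight_sum_less[of "Suc ?j" "length xs"] weight_sum_nonneg[of "Suc ?j" "length ys"] K_pos
      by (intro mult_left_mono) auto
    also have "\<dots> = 2 * (K * c) * ?l\<^sup>2"
      by simp
    also have "\<dots> \<le> ?l\<^sup>2 / 8"
      using Kc_le mult_right_mono[of "2 * (K * c)" "1/8" "?l\<^sup>2"] by simp
    also have "\<dots> < (?l / 2)\<^sup>2"
      using weight_pos[of ?j] by (simp add: power2_eq_square)
    finally show ?thesis .
  qed
  ultimately have "0 < slope v * point v + intercept v - (slope w * point v + intercept w)"
    unfolding tangent_gap by simp
  then show ?thesis by simp
qed

lemma separation:
  assumes "\<not> leW v w"
  shows "slope w * point v + intercept w < slope v * point v + intercept v"
proof (cases "prefix v w")
  case True
  then obtain z where w: "w = v @ z" by (rule prefixE)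
  with assms have "z \<noteq> []" by (auto simp: leW_def)
  with w show ?thesis using separation_extension by simp
next
  case False
  with assms have "v \<parallel> w" by (simp add: parallel_def leW_def)
  from parallel_decomp[OF this] obtain u x xs y ys
    where "x \<noteq> y" "v = u @ x # xs" "w = u @ y # ys" by blast
  then show ?thesis by (rule separation_diverge)
qed

end

theorem lemma25:
  fixes s t :: real
  assumes "1 \<le> s" and "s < t"
  shows "\<exists>(a :: bool list \<Rightarrow> rat) (b :: bool list \<Rightarrow> rat) (r :: bool list \<Rightarrow> real).
           (\<forall>w. a w > 2 \<and> b w > 2 \<and> s < r w \<and> r w < t) \<and>
           (\<forall>v w. leW v w \<and> v \<noteq> w \<longrightarrow> a v < a w \<and> b v < b w) \<and>
           (\<forall>v w. \<not> leW v w \<longrightarrow>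
              of_rat (a v) * r v + of_rat (b v) > of_rat (a w) * r v + of_rat (b w))"
proof -
  obtain lo r\<^sub>0 :: rat where lo: "s < of_rat lo" and "lo < r\<^sub>0" and r0: "of_rat r\<^sub>0 < t"
    by (metis assms(2) of_rat_dense of_rat_less order.strict_trans)
  with assms(1) have "1 < lo" by (metis of_rat_1 of_rat_less order_le_less_trans)
  define L K where "L = (r\<^sub>0 - lo) / 4" and "K = 4 * r\<^sub>0 + 1"
  define c where "c = 1 / (16 * K)"
  interpret tangent_family L c r\<^sub>0 K
    using \<open>1 < lo\<close> \<open>lo < r\<^sub>0\<close> by unfold_locales (auto simp: L_def K_def c_def field_simps)
  have "r\<^sub>0 - 4 * L = lo" by (simp add: L_def field_simps)
  then have "lo < point w" for w
    using point_gt[of w] by simp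
  then have "s < of_rat (point w) \<and> of_rat (point w) < t" for w
    using point_le lo r0 by (meson of_rat_less of_rat_less_eq order.strict_trans order.strict_trans1)
  moreover have "of_rat (slope w) * of_rat (point v) + of_rat (intercept w)
      < (of_rat (slope v) * of_rat (point v) + of_rat (intercept v) :: real)"
    if "\<not> leW v w" for v w
    using separation[OF that] by (metis of_rat_add of_rat_less of_rat_mult)
  ultimately show ?thesis
    using slope_gt_2 intercept_gt_2 extension_decreases
    by (intro exI[of _ slope] exI[of _ intercept] exI[of _ "\<lambda>w. of_rat (point w)"])
      (auto simp: leW_def prefix_def)
qed

end
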